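(* Let $m,n\in\mathbb{N}$, $T=\{1,\dots,m\}$, $\mathcal{F}(A,b)=\{x\in\mathbb{R}^n\mid Ax\le b\}$ for $(A,b)\in\mathbb{R}^{m\times n}\times\mathbb{R}^m$, and let $(\bar A,\bar b)$ be such that $\mathcal{F}(\bar A,\bar b)$ is nonempty and bounded. Then $$\operatorname{Lipusc}\mathcal{F}(\bar A,\bar b)=\max_{x\in\mathcal{E}(\bar A,\bar b)}\left((\|x\|+1)\max_{D\in\mathcal{D}_{\bar A,\bar b}(x)}\Big[\operatorname{dist}_*\big(0_n,\operatorname{conv}\{\bar a_t,\ t\in D\}\big)\Big]^{-1}\right).$$
   Context: $\bar a_t'$ is the $t$-th row of $\bar A$. $\mathcal{E}(\bar A,\bar b):=\operatorname{extr}\big(\mathcal{F}(\bar A,\bar b)\cap\operatorname{span}\{\bar a_t,\ t\in T\}\big)$ (set of extreme points). $T_{\bar A,\bar b}(x)=\{t\in T\mid\bar a_t'x=\bar b_t\}$. $\mathcal{D}_{\bar A,\bar b}(x)$ is the family of all $D\subset T_{\bar A,\bar b}(x)$ for which the system $\bar a_t'd=1$ ($t\in D$), $\bar a_t'd<1$ ($t\in T_{\bar A,\bar b}(x)\setminus D$) in $d\in\mathbb{R}^n$ is consistent. $\mathbb{R}^n$ carries an arbitrary norm $\|\cdot\|$ with dual norm $\|u\|_*=\max_{\|x\|\le1}|u'x|$, and $\operatorname{dist}_*(0_n,C)=\inf_{u\in C}\|u\|_*$, with $\operatorname{conv}\emptyset=\emptyset$, $\inf\emptyset=+\infty$ and $(+\infty)^{-1}=0$.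 The parameter space carries the norm $\|(A,b)\|=\max_{t\in T}\max\{\|a_t\|_*,|b_t|\}$. $\operatorname{Lipusc}\mathcal{F}(\bar A,\bar b)$ is the infimum of all $\kappa\ge0$ for which there is a neighborhood $V$ of $(\bar A,\bar b)$ with $\inf_{z\in\mathcal{F}(\bar A,\bar b)}\|x-z\|\le\kappa\|(A,b)-(\bar A,\bar b)\|$ for all $(A,b)\in V$ and all $x\in\mathcal{F}(A,b)$. *)

theory Defs
  imports "HOL-Analysis.Analysis"
begin

definition is_norm :: "(real^'n \<Rightarrow> real) \<Rightarrow> bool" where
  "is_norm N \<longleftrightarrow> (\<forall>x. 0 \<le> N x) \<and> (\<forall>x. N x = 0 \<longleftrightarrow> x = 0) \<and>
     (\<forall>c x. N (c *\<^sub>R x) = \<bar>c\<bar> * N x) \<and> (\<forall>x y. N (x + y) \<le> N x + N y)"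

definition dual_norm :: "(real^'n \<Rightarrow> real) \<Rightarrow> real^'n \<Rightarrow> real" where
  "dual_norm N u = Sup {\<bar>u \<bullet> x\<bar> | x. N x \<le> 1}"

definition feas :: "real^'n^'m \<Rightarrow> real^'m \<Rightarrow> (real^'n) set" where
  "feas A b = {x. \<forall>t. (A $ t) \<bullet> x \<le> b $ t}"

definition param_norm :: "(real^'n \<Rightarrow> real) \<Rightarrow> real^'n^'m \<Rightarrow> real^'m \<Rightarrow> real" where
  "param_norm N A b = Max ((\<lambda>t. max (dual_norm N (A $ t)) \<bar>b $ t\<bar>) ` UNIV)"

text \<open>Lipschitz upper semicontinuity modulus (value in [0,+\<infinity>], Inf of empty set = +\<infinity>).\<close>
definition Lipusc :: "(real^'n \<Rightarrow> real) \<Rightarrow> real^'n^'m \<Rightarrow> real^'m \<Rightarrow> ereal" where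
  "Lipusc N Ab bb = Inf {ereal \<kappa> | \<kappa>. 0 \<le> \<kappa> \<and>
     (\<exists>\<epsilon>>0. \<forall>A b. param_norm N (A - Ab) (b - bb) < \<epsilon> \<longrightarrow>
        (\<forall>x \<in> feas A b. Inf {N (x - z) | z. z \<in> feas Ab bb} \<le> \<kappa> * param_norm N (A - Ab) (b - bb)))}"

definition active :: "real^'n^'m \<Rightarrow> real^'m \<Rightarrow> real^'n \<Rightarrow> 'm set" where
  "active A b x = {t. (A $ t) \<bullet> x = b $ t}"

definition Dfam :: "real^'n^'m \<Rightarrow> real^'m \<Rightarrow> real^'n \<Rightarrow> 'm set set" where
  "Dfam A b x = {D. D \<subseteq> active A b x \<and>
     (\<exists>d. (\<forall>t\<in>D. (A $ t) \<bullet> d = 1) \<and> (\<forall>t \<in> active A b x - D. (A $ t) \<bullet> d < 1))}"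

definition Eset :: "real^'n^'m \<Rightarrow> real^'m \<Rightarrow> (real^'n) set" where
  "Eset A b = {x. x extreme_point_of (feas A b \<inter> span (range (\<lambda>t. A $ t)))}"

text \<open>[dist_*(0, conv C)]^{-1} with conv {} = {}, inf {} = +\<infinity>, (+\<infinity>)^{-1} = 0.\<close>
definition inv_dist_conv :: "(real^'n \<Rightarrow> real) \<Rightarrow> (real^'n) set \<Rightarrow> real" where
  "inv_dist_conv N C = (if C = {} then 0
      else inverse (Inf {dual_norm N u | u. u \<in> convex hull C}))"

end

theory Submission
  imports Defs
begin

text \<open>
  Lower bound: let x be a vertex of F and D \<in> D(x), exposed by a direction d. Tilt every row
  by e w, where w is a norming functional of x, and relax every right-hand side by e. For small
  e > 0 the point x + s d with s = e (\<parallel>x\<parallel> + 1) / (1 + e \<parallel>d\<parallel>) is feasible for the perturbed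
  system, while u'(x + s d - z) \<ge> s for all u \<in> conv {a_t, t \<in> D} and z \<in> F. So its distance
  to F is at least s / dist_*(0, conv {a_t, t \<in> D}), and e \<rightarrow> 0 gives the bound.

  Upper bound: let x be feasible for a perturbation of size \<delta> and z a nearest point of F.
  The dual certificate of this projection is a normal vector of F at z, hence lies in the cone
  of the rows active at z, and LP duality moves it into the cone of an exposed subfamily
  D \<in> D(z). This gives \<parallel>x - z\<parallel> \<le> H(z) \<delta> (1 + \<parallel>x\<parallel>), with H(z) the inner maximum of the formula.
  Finally (1 + \<parallel>z\<parallel>) H(z) is dominated by the maximum over the vertices, because D(z) only grows
  towards the vertices of the face of F through z and the norm is convex.
\<close>

section \<open>Finite cones and LP duality\<close>

lemma convex_cone_hull_finite_image:
  fixes c :: "'i \<Rightarrow> 'a::real_vector"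
  assumes "finite I"
  shows "convex_cone hull (c ` I) = {\<Sum>t\<in>I. l t *\<^sub>R c t | l. \<forall>t\<in>I. 0 \<le> l t}"
    (is "_ = ?K")
proof
  have "c ` I \<subseteq> ?K"
  proof
    fix y assume "y \<in> c ` I"
    then obtain s where s: "s \<in> I" "y = c s" by blast
    then have "y = (\<Sum>t\<in>I. (if t = s then 1 else 0) *\<^sub>R c t)"
      using assms by (simp add: if_distrib[of "\<lambda>r. r *\<^sub>R _"] cong: if_cong)
    then show "y \<in> ?K" by force
  qed
  moreover have "convex_cone ?K"
    unfolding convex_cone_iff
  proof (intro conjI ballI allI impI)
    show "0 \<in> ?K" by (force intro: exI[of _ "\<lambda>_. 0"])
  next
    fix x y assume "x \<in> ?K" "y \<in> ?K"
    then obtain l l' where "\<forall>t\<in>I. 0 \<le> l t" "\<forall>t\<in>I. 0 \<le> l' t"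
      and "x = (\<Sum>t\<in>I. l t *\<^sub>R c t)" "y = (\<Sum>t\<in>I. l' t *\<^sub>R c t)" by blast
    then show "x + y \<in> ?K"
      by (force intro: exI[of _ "\<lambda>t. l t + l' t"] simp: scaleR_add_left sum.distrib)
  next
    fix x and k :: real assume "x \<in> ?K" "0 \<le> k"
    then obtain l where "\<forall>t\<in>I. 0 \<le> l t" "x = (\<Sum>t\<in>I. l t *\<^sub>R c t)" by blast
    with \<open>0 \<le> k\<close> show "k *\<^sub>R x \<in> ?K"
      by (force intro: exI[of _ "\<lambda>t. k * l t"] simp: scaleR_sum_right)
  qed
  ultimately show "convex_cone hull (c ` I) \<subseteq> ?K" by (rule hull_minimal)
next
  have "(\<Sum>t\<in>J. l t *\<^sub>R c t) \<in> convex_cone hull (c ` I)"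
    if "J \<subseteq> I" "\<forall>t\<in>I. 0 \<le> l t" for J l
    using finite_subset[OF that(1) assms] that
    by (induction J rule: finite_induct)
       (simp_all add: convex_cone_hull_contains_0 convex_cone_hull_add convex_cone_hull_mul hull_inc)
  then show "?K \<subseteq> convex_cone hull (c ` I)" by blast
qed

lemma farkas_convex_cone_hull:
  fixes S :: "'a::euclidean_space set"
  assumes "finite S" "y \<notin> convex_cone hull S"
  obtains w where "\<And>c. c \<in> S \<Longrightarrow> 0 \<le> w \<bullet> c" "w \<bullet> y < 0"
proof -
  obtain a b where ab: "a \<bullet> y < b" "\<And>x. x \<in> convex_cone hull S \<Longrightarrow> b < a \<bullet> x"
    using separating_hyperplane_closed_point[OF convex_convex_cone_hull closed_convex_cone_hull[OF assms(1)] assms(2)]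
    by blast
  have "b < 0" using ab(2)[OF convex_cone_hull_contains_0] by simp
  have "0 \<le> a \<bullet> c" if "c \<in> S" for c
  proof (rule ccontr)
    assume neg: "\<not> 0 \<le> a \<bullet> c"
    have "(b / (a \<bullet> c)) *\<^sub>R c \<in> convex_cone hull S"
      using neg \<open>b < 0\<close> that by (intro convex_cone_hull_mul hull_inc) (auto simp: divide_nonpos_neg)
    from ab(2)[OF this] neg show False by simp
  qed
  with ab(1) \<open>b < 0\<close> show thesis by (intro that[of a]) auto
qed

lemma convex_cone_hull_singletonD:
  "x \<in> convex_cone hull {p} \<Longrightarrow> \<exists>\<mu>\<ge>0. x = \<mu> *\<^sub>R p"
  by (auto simp: convex_cone_hull_convex_hull intro: exI[of _ 0])

lemma convex_cone_hull_lifted: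
  fixes c :: "'i \<Rightarrow> 'a::real_vector"
  assumes "finite I"
  shows "(p, s) \<in> convex_cone hull ((\<lambda>t. (c t, 1::real)) ` I) \<longleftrightarrow>
    (\<exists>l. (\<forall>t\<in>I. 0 \<le> l t) \<and> p = (\<Sum>t\<in>I. l t *\<^sub>R c t) \<and> s = sum l I)"
  unfolding convex_cone_hull_finite_image[OF assms] by (auto simp: sum_prod)

lemma convex_cone_hull_min_weight:
  fixes c :: "'i \<Rightarrow> 'a::euclidean_space"
  assumes fin: "finite I" and a: "a \<in> convex_cone hull (c ` I)"
  obtains l where "\<forall>t\<in>I. 0 \<le> l t" "a = (\<Sum>t\<in>I. l t *\<^sub>R c t)"
    "\<And>l'. \<forall>t\<in>I. 0 \<le> l' t \<Longrightarrow> a = (\<Sum>t\<in>I. l' t *\<^sub>R c t) \<Longrightarrow> sum l I \<le> sum l' I"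
proof -
  let ?K = "convex_cone hull ((\<lambda>t. (c t, 1::real)) ` I)"
  define S where "S = {s. (a, s) \<in> ?K}"
  have "closed S"
  proof -
    have "closed ?K" using fin by (intro closed_convex_cone_hull) simp
    then have "closed ((\<lambda>s. (a, s)) -` ?K)" by (intro continuous_closed_vimage continuous_intros)
    moreover have "S = (\<lambda>s. (a, s)) -` ?K" unfolding S_def by auto
    ultimately show ?thesis by simp
  qed
  moreover have "S \<noteq> {}"
  proof -
    obtain l where "\<forall>t\<in>I. 0 \<le> l t" "a = (\<Sum>t\<in>I. l t *\<^sub>R c t)"
      using a unfolding convex_cone_hull_finite_image[OF fin] by blast
    then have "sum l I \<in> S" unfolding S_def convex_cone_hull_lifted[OF fin] by blast
    then show ?thesis by blast
  qed
  moreover have bdd: "bdd_below S"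
    unfolding S_def convex_cone_hull_lifted[OF fin] by (auto intro!: bdd_belowI[of _ 0] sum_nonneg)
  ultimately have "Inf S \<in> S" by (rule closed_contains_Inf[rotated 2])
  then obtain l where l: "\<forall>t\<in>I. 0 \<le> l t" "a = (\<Sum>t\<in>I. l t *\<^sub>R c t)" "Inf S = sum l I"
    unfolding S_def convex_cone_hull_lifted[OF fin] by blast
  have "sum l I \<le> sum l' I" if "\<forall>t\<in>I. 0 \<le> l' t" "a = (\<Sum>t\<in>I. l' t *\<^sub>R c t)" for l'
  proof -
    have "sum l' I \<in> S" using that unfolding S_def convex_cone_hull_lifted[OF fin] by blast
    with bdd show ?thesis unfolding l(3)[symmetric] by (rule cInf_lower[rotated])
  qed
  with l show thesis by (intro that) auto
qed

lemma lp_strong_duality: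
  fixes c :: "'i \<Rightarrow> 'a::euclidean_space"
  assumes fin: "finite I" and a: "a \<in> convex_cone hull (c ` I)"
  obtains l d where "\<forall>t\<in>I. 0 \<le> l t" "a = (\<Sum>t\<in>I. l t *\<^sub>R c t)"
    "\<forall>t\<in>I. c t \<bullet> d \<le> 1" "sum l I \<le> a \<bullet> d"
proof -
  obtain l where l: "\<forall>t\<in>I. 0 \<le> l t" "a = (\<Sum>t\<in>I. l t *\<^sub>R c t)"
    and min: "\<And>l'. \<forall>t\<in>I. 0 \<le> l' t \<Longrightarrow> a = (\<Sum>t\<in>I. l' t *\<^sub>R c t) \<Longrightarrow> sum l I \<le> sum l' I"
    using convex_cone_hull_min_weight[OF fin a] by blast
  define m where "m = sum l I"
  let ?K = "convex_cone hull ((\<lambda>t. (c t, 1::real)) ` I)"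
  have snd_K: "0 \<le> snd k" if "k \<in> ?K" for k
    using that convex_cone_hull_lifted[OF fin, where c = c and p = "fst k" and s = "snd k"] by (auto intro!: sum_nonneg)
  \<comment> \<open>a representation of (0, -1) would yield a representation of a of weight below m\<close>
  have notin: "(0, -1) \<notin> convex_cone hull ((\<lambda>t. (c t, 1)) ` I \<union> {(-a, -m)})"
  proof
    assume "(0, -1) \<in> convex_cone hull ((\<lambda>t. (c t, 1)) ` I \<union> {(-a, -m)})"
    then obtain k \<mu> where k: "k \<in> ?K" "0 \<le> \<mu>" "(0, -1) = k + \<mu> *\<^sub>R (-a, -m)"
      unfolding convex_cone_hull_Un by (auto dest!: convex_cone_hull_singletonD)
    then have k_eq: "k = (\<mu> *\<^sub>R a, \<mu> * m - 1)" by (auto simp: prod_eq_iff)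
    show False
    proof (cases "\<mu> = 0")
      case True
      with k_eq snd_K[OF k(1)] show False by simp
    next
      case False
      with k have "inverse \<mu> *\<^sub>R k \<in> ?K" "\<mu> > 0" by (auto intro: convex_cone_hull_mul)
      moreover have "inverse \<mu> *\<^sub>R k = (a, m - inverse \<mu>)"
        using \<open>\<mu> > 0\<close> by (simp add: k_eq field_simps)
      ultimately have "(a, m - inverse \<mu>) \<in> ?K" by simp
      then obtain l' where l': "\<forall>t\<in>I. 0 \<le> l' t" "a = (\<Sum>t\<in>I. l' t *\<^sub>R c t)"
        "m - inverse \<mu> = sum l' I"
        unfolding convex_cone_hull_lifted[OF fin] by blast
      with min[OF l'(1,2)] \<open>\<mu> > 0\<close> show False
        unfolding m_def using positive_imp_inverse_positive[of \<mu>] by linarith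
    qed
  qed
  obtain w where w: "\<And>q. q \<in> (\<lambda>t. (c t, 1)) ` I \<union> {(-a, -m)} \<Longrightarrow> 0 \<le> w \<bullet> q"
    "w \<bullet> (0, -1) < 0"
    by (rule farkas_convex_cone_hull[OF _ notin]) (use fin in auto)
  obtain wa \<sigma> where w_eq: "w = (wa, \<sigma>)" by (cases w)
  have "0 < \<sigma>" using w(2) by (simp add: w_eq)
  define d where "d = - inverse \<sigma> *\<^sub>R wa"
  have "c t \<bullet> d \<le> 1" if "t \<in> I" for t
  proof -
    have "0 \<le> wa \<bullet> c t + \<sigma>" using w(1)[of "(c t, 1)"] that by (simp add: w_eq)
    with \<open>0 < \<sigma>\<close> show ?thesis by (simp add: d_def inner_commute field_simps)
  qed
  moreover have "m \<le> a \<bullet> d"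
  proof -
    have "0 \<le> - (wa \<bullet> a) - \<sigma> * m" using w(1)[of "(-a, -m)"] by (simp add: w_eq)
    with \<open>0 < \<sigma>\<close> show ?thesis by (simp add: d_def inner_commute field_simps)
  qed
  ultimately show thesis using l by (intro that[of l d]) (auto simp: m_def)
qed

lemma convex_cone_hull_exposed_subfamily:
  fixes c :: "'i \<Rightarrow> 'a::euclidean_space"
  assumes fin: "finite I" and a: "a \<in> convex_cone hull (c ` I)"
  obtains D d where "D \<subseteq> I" "\<forall>t\<in>D. c t \<bullet> d = 1" "\<forall>t\<in>I - D. c t \<bullet> d < 1"
    "a \<in> convex_cone hull (c ` D)"
proof -
  obtain l d where l: "\<forall>t\<in>I. 0 \<le> l t" "a = (\<Sum>t\<in>I. l t *\<^sub>R c t)"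
    and d: "\<forall>t\<in>I. c t \<bullet> d \<le> 1" "sum l I \<le> a \<bullet> d"
    by (rule lp_strong_duality[OF fin a])
  define D where "D = {t \<in> I. c t \<bullet> d = 1}"
  \<comment> \<open>complementary slackness\<close>
  have "\<forall>t\<in>I. 0 \<le> l t * (1 - c t \<bullet> d)" using d(1) l(1) by simp
  moreover have "(\<Sum>t\<in>I. l t * (1 - c t \<bullet> d)) \<le> 0"
    using d(2) by (simp add: l(2) inner_sum_left sum_subtractf right_diff_distrib)
  ultimately have slack: "\<forall>t\<in>I. l t * (1 - c t \<bullet> d) = 0"
    using sum_nonneg_eq_0_iff[OF fin] sum_nonneg[of I] by (smt (verit))
  have "a = (\<Sum>t\<in>D. l t *\<^sub>R c t)"
    unfolding l(2) D_def by (rule sum.mono_neutral_right) (use fin slack in auto)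
  then have "a \<in> convex_cone hull (c ` D)"
    using l(1) fin by (auto simp: convex_cone_hull_finite_image D_def)
  moreover have "\<forall>t\<in>I - D. c t \<bullet> d < 1" using d(1) by (force simp: D_def)
  ultimately show thesis by (intro that[of D d]) (auto simp: D_def)
qed

section \<open>Polyhedra\<close>

lemma polyhedron_feas: "polyhedron (feas A b)"
proof -
  have "feas A b = (\<Inter>t. {x. A $ t \<bullet> x \<le> b $ t})" by (auto simp: feas_def)
  then show ?thesis by (auto intro!: polyhedron_Inter polyhedron_halfspace_le)
qed

lemma convex_feas: "convex (feas A b)"
  by (rule polyhedron_imp_convex[OF polyhedron_feas])

lemma closed_feas: "closed (feas A b)"
  by (rule polyhedron_imp_closed[OF polyhedron_feas])

lemma inner_convex_hull_le:
  assumes "u \<in> convex hull S" "\<And>c. c \<in> S \<Longrightarrow> c \<bullet> v \<le> \<beta>"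
  shows "u \<bullet> v \<le> \<beta>"
proof -
  have "convex hull S \<subseteq> {u. v \<bullet> u \<le> \<beta>}"
    using assms(2) by (intro hull_minimal convex_halfspace_le) (auto simp: inner_commute)
  with assms(1) show ?thesis by (auto simp: inner_commute)
qed

lemma inner_convex_hull_ge:
  assumes "u \<in> convex hull S" "\<And>c. c \<in> S \<Longrightarrow> \<beta> \<le> c \<bullet> v"
  shows "\<beta> \<le> u \<bullet> v"
  using inner_convex_hull_le[of u S "- v" "- \<beta>"] assms by simp

lemma inner_convex_hull_eq:
  assumes "u \<in> convex hull S" "\<And>c. c \<in> S \<Longrightarrow> c \<bullet> v = \<beta>"
  shows "u \<bullet> v = \<beta>"
  using inner_convex_hull_le[OF assms(1)] inner_convex_hull_ge[OF assms(1)] assms(2)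
  by (metis order_antisym order_refl)

lemma eventually_in_feas:
  fixes P :: "'a \<Rightarrow> real^'n^'m::finite" and q :: "'a \<Rightarrow> real^'m" and y :: "'a \<Rightarrow> real^'n"
  assumes x: "x \<in> feas A b"
    and lim: "\<And>t. ((\<lambda>e. P e $ t \<bullet> y e - q e $ t) \<longlongrightarrow> A $ t \<bullet> x - b $ t) F"
    and act: "\<And>t. t \<in> active A b x \<Longrightarrow> eventually (\<lambda>e. P e $ t \<bullet> y e \<le> q e $ t) F"
  shows "eventually (\<lambda>e. y e \<in> feas (P e) (q e)) F"
  unfolding feas_def mem_Collect_eq
proof (rule eventually_all_finite)
  fix t
  show "eventually (\<lambda>e. P e $ t \<bullet> y e \<le> q e $ t) F"
  proof (cases "t \<in> active A b x")
    case False
    then have "A $ t \<bullet> x - b $ t < 0" using x by (auto simp: feas_def active_def less_le)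
    from order_tendstoD(2)[OF lim this] show ?thesis by eventually_elim simp
  qed (rule act)
qed

lemma normal_in_active_cone:
  assumes z: "z \<in> feas A b" and normal: "\<And>w. w \<in> feas A b \<Longrightarrow> a \<bullet> w \<le> a \<bullet> z"
  shows "a \<in> convex_cone hull ((\<lambda>t. A $ t) ` active A b z)"
proof (rule ccontr)
  assume "a \<notin> convex_cone hull ((\<lambda>t. A $ t) ` active A b z)"
  then obtain v where v: "\<And>t. t \<in> active A b z \<Longrightarrow> 0 \<le> v \<bullet> A $ t" "v \<bullet> a < 0"
    by (rule farkas_convex_cone_hull[rotated]) auto
  \<comment> \<open>z - e v stays feasible for small e > 0 but increases the objective a\<close>
  have "eventually (\<lambda>e. z - e *\<^sub>R v \<in> feas A b) (at_right 0)"
  proof (rule eventually_in_feas[OF z])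
    show "((\<lambda>e. A $ t \<bullet> (z - e *\<^sub>R v) - b $ t) \<longlongrightarrow> A $ t \<bullet> z - b $ t) (at_right 0)" for t
      by (auto intro!: tendsto_eq_intros)
    show "eventually (\<lambda>e. A $ t \<bullet> (z - e *\<^sub>R v) \<le> b $ t) (at_right 0)"
      if "t \<in> active A b z" for t
      using eventually_at_right_less[of "0::real"]
    proof eventually_elim
      case (elim e)
      with v(1)[OF that] that show ?case
        by (simp add: active_def inner_diff_right inner_commute)
    qed
  qed
  then obtain e where "0 < e" "z - e *\<^sub>R v \<in> feas A b"
    using eventually_happens'[OF trivial_limit_at_right_real]
      eventually_conj[OF eventually_at_right_less] by blast
  then have "0 \<le> e * (v \<bullet> a)"
    using normal[of "z - e *\<^sub>R v"] by (simp add: inner_diff_right inner_commute)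
  with \<open>0 < e\<close> v(2) show False by (simp add: zero_le_mult_iff)
qed

lemma empty_in_Dfam: "{} \<in> Dfam A b x"
  unfolding Dfam_def by (auto intro!: exI[of _ 0])

lemma finite_Dfam: "finite (Dfam (A :: real^'n^'m::finite) b x)"
  by (rule finite_subset[of _ "Pow UNIV"]) auto

lemma eventually_less_mult_at_top:
  assumes "0 < c"
  shows "eventually (\<lambda>\<mu>::real. k < \<mu> * c) at_top"
  unfolding eventually_at_top_linorder
proof (intro exI allI impI)
  fix \<mu> assume "(\<bar>k\<bar> + 1) / c \<le> \<mu>"
  with assms have "\<bar>k\<bar> + 1 \<le> \<mu> * c" by (simp add: field_simps)
  then show "k < \<mu> * c" by linarith
qed

lemma Dfam_mono:
  assumes z: "z \<in> feas A b" and act: "active A b z \<subseteq> active A b v"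
  shows "Dfam A b z \<subseteq> Dfam A b v"
proof
  fix D assume "D \<in> Dfam A b z"
  then obtain d where D: "D \<subseteq> active A b z" and d1: "\<forall>t\<in>D. A $ t \<bullet> d = 1"
    and d2: "\<forall>t\<in>active A b z - D. A $ t \<bullet> d < 1"
    unfolding Dfam_def by blast
  let ?J = "active A b v - active A b z"
  \<comment> \<open>tilting d along z - v keeps it on active A b z and pushes the new constraints below 1\<close>
  have "\<forall>t\<in>?J. 0 < b $ t - A $ t \<bullet> z"
    using z by (auto simp: feas_def active_def less_le)
  then have "eventually (\<lambda>\<mu>. \<forall>t\<in>?J. A $ t \<bullet> d - 1 < \<mu> * (b $ t - A $ t \<bullet> z)) at_top"
    by (intro eventually_ball_finite ballI eventually_less_mult_at_top) auto
  then obtain \<mu> where \<mu>: "\<forall>t\<in>?J. A $ t \<bullet> d - 1 < \<mu> * (b $ t - A $ t \<bullet> z)"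
    using eventually_happens'[OF trivial_limit_at_top_linorder] by blast
  define d' where "d' = d + \<mu> *\<^sub>R (z - v)"
  have same: "A $ t \<bullet> d' = A $ t \<bullet> d" if "t \<in> active A b z" for t
    using that act by (auto simp: d'_def active_def inner_add_right inner_diff_right)
  have "A $ t \<bullet> d' < 1" if "t \<in> active A b v - D" for t
  proof (cases "t \<in> active A b z")
    case False
    with that \<mu> show ?thesis
      by (auto simp: d'_def active_def inner_add_right inner_diff_right algebra_simps)
  qed (use that same d2 in auto)
  with D act d1 same show "D \<in> Dfam A b v"
    unfolding Dfam_def by (intro CollectI conjI exI[of _ d']) auto
qed

lemma active_face_of_feas:
  "{w \<in> feas A b. active A b z \<subseteq> active A b w} face_of feas A b"
proof -
  let ?F = "feas A b"
  have eq: "{w \<in> ?F. active A b z \<subseteq> active A b w}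
      = \<Inter> (insert ?F ((\<lambda>t. ?F \<inter> {w. A $ t \<bullet> w = b $ t}) ` active A b z))"
    by (auto simp: active_def)
  have "?F \<inter> {w. A $ t \<bullet> w = b $ t} face_of ?F" for t
    by (rule face_of_Int_supporting_hyperplane_le[OF convex_feas]) (simp add: feas_def)
  then show ?thesis
    unfolding eq by (intro face_of_Inter) (auto intro: face_of_refl convex_feas)
qed

lemma span_rows_eq_UNIV:
  assumes ne: "feas A b \<noteq> {}" and bdd: "bounded (feas A b)"
  shows "span (range (\<lambda>t. A $ t)) = UNIV"
proof (rule ccontr)
  assume "span (range (\<lambda>t. A $ t)) \<noteq> UNIV"
  then have "span (range (\<lambda>t. A $ t)) \<subset> span UNIV" by (auto simp: span_UNIV)
  then obtain v where "v \<noteq> 0" and v: "\<And>t. orthogonal v (A $ t)"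
    by (rule orthogonal_to_subspace_exists_gen) (meson rangeI span_base)
  obtain z where z: "z \<in> feas A b" using ne by blast
  have line: "z + k *\<^sub>R v \<in> feas A b" for k
    using z v by (simp add: feas_def inner_add_right orthogonal_def inner_commute)
  obtain B where B: "\<And>x. x \<in> feas A b \<Longrightarrow> norm x \<le> B" using bdd by (auto simp: bounded_iff)
  define k where "k = (B + norm z + 1) / norm v"
  have "norm (k *\<^sub>R v) = B + norm z + 1"
    using \<open>v \<noteq> 0\<close> B[OF z] by (simp add: k_def) (smt (verit) norm_ge_zero)
  moreover have "norm (k *\<^sub>R v) \<le> norm (z + k *\<^sub>R v) + norm z"
    using norm_triangle_ineq4[of "z + k *\<^sub>R v" z] by simp
  ultimately show False using B[OF line, of k] by linarith
qed

lemma Eset_eq_extreme_points: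
  assumes "feas A b \<noteq> {}" "bounded (feas A b)"
  shows "Eset A b = {x. x extreme_point_of feas A b}"
  unfolding Eset_def span_rows_eq_UNIV[OF assms] by simp

section \<open>Norms and dual norms\<close>

lemma convex_sublevel_le:
  assumes "convex_on UNIV f"
  shows "convex {x. f x \<le> r}"
proof (rule convexI)
  fix x y and u v :: real
  assume "x \<in> {x. f x \<le> r}" "y \<in> {x. f x \<le> r}" "0 \<le> u" "0 \<le> v" "u + v = 1"
  moreover from this have "f (u *\<^sub>R x + v *\<^sub>R y) \<le> u * f x + v * f y"
    using assms by (simp add: convex_on_def)
  ultimately show "u *\<^sub>R x + v *\<^sub>R y \<in> {x. f x \<le> r}"
    using convex_bound_le[of "f x" r "f y" u v] by simp
qed

lemma convex_sublevel_lt: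
  assumes "convex_on UNIV f"
  shows "convex {x. f x < r}"
proof (rule convexI)
  fix x y and u v :: real
  assume "x \<in> {x. f x < r}" "y \<in> {x. f x < r}" "0 \<le> u" "0 \<le> v" "u + v = 1"
  moreover from this have "f (u *\<^sub>R x + v *\<^sub>R y) \<le> u * f x + v * f y"
    using assms by (simp add: convex_on_def)
  ultimately show "u *\<^sub>R x + v *\<^sub>R y \<in> {x. f x < r}"
    using convex_bound_lt[of "f x" r "f y" u v] by simp
qed

locale vector_norm =
  fixes N :: "real^'n::finite \<Rightarrow> real"
  assumes is_norm: "is_norm N"
begin

lemma N_nonneg: "0 \<le> N x"
  using is_norm by (simp add: is_norm_def)

lemma N_eq_0_iff: "N x = 0 \<longleftrightarrow> x = 0"
  using is_norm by (simp add: is_norm_def)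

lemma N_scaleR: "N (c *\<^sub>R x) = \<bar>c\<bar> * N x"
  using is_norm by (simp add: is_norm_def)

lemma N_triangle: "N (x + y) \<le> N x + N y"
  using is_norm by (simp add: is_norm_def)

lemma N_0 [simp]: "N 0 = 0"
  by (simp add: N_eq_0_iff)

lemma N_minus_commute: "N (x - y) = N (y - x)"
  using N_scaleR[of "-1" "x - y"] by simp

lemma convex_on_N_diff: "convex_on UNIV (\<lambda>y. N (y - x))"
proof (rule convex_onI)
  fix t :: real and p q :: "real^'n"
  assume t: "0 < t" "t < 1"
  have "(1 - t) *\<^sub>R p + t *\<^sub>R q - x = (1 - t) *\<^sub>R (p - x) + t *\<^sub>R (q - x)"
    by (simp add: algebra_simps)
  then show "N ((1 - t) *\<^sub>R p + t *\<^sub>R q - x) \<le> (1 - t) * N (p - x) + t * N (q - x)"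
    using N_triangle[of "(1 - t) *\<^sub>R (p - x)" "t *\<^sub>R (q - x)"] t by (simp add: N_scaleR)
qed simp

lemma continuous_on_N: "continuous_on S N"
  using convex_on_continuous[OF open_UNIV convex_on_N_diff[of 0]]
  by (simp add: continuous_on_subset[OF _ subset_UNIV])

lemma N_ge_norm:
  obtains c where "0 < c" "\<And>x. c * norm x \<le> N x"
proof -
  have "sphere (0::real^'n) 1 \<noteq> {}" by simp
  then obtain x0 where x0: "x0 \<in> sphere 0 1" "\<And>y. y \<in> sphere 0 1 \<Longrightarrow> N x0 \<le> N y"
    using continuous_attains_inf[OF compact_sphere _ continuous_on_N] by blast
  have "0 < N x0" using x0(1) N_nonneg[of x0] N_eq_0_iff[of x0] by auto
  moreover have "N x0 * norm x \<le> N x" for x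
  proof (cases "x = 0")
    case False
    then have "N x0 \<le> N (inverse (norm x) *\<^sub>R x)" by (intro x0(2)) simp
    with False show ?thesis by (simp add: N_scaleR field_simps)
  qed simp
  ultimately show thesis by (rule that)
qed

lemma dual_norm_bdd: "bdd_above {\<bar>u \<bullet> x\<bar> | x. N x \<le> 1}"
proof -
  obtain c where c: "0 < c" "\<And>x. c * norm x \<le> N x" using N_ge_norm by blast
  have "\<bar>u \<bullet> x\<bar> \<le> norm u / c" if "N x \<le> 1" for x
  proof -
    have "c * norm x \<le> 1" using c(2)[of x] that by simp
    with c(1) have "norm x \<le> 1 / c" by (simp add: pos_le_divide_eq mult.commute)
    then show ?thesis
      using Cauchy_Schwarz_ineq2[of u x] mult_left_mono[of "norm x" "1 / c" "norm u"] by simp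
  qed
  then show ?thesis unfolding bdd_above_def by blast
qed

lemma dual_norm_upper: "N x \<le> 1 \<Longrightarrow> \<bar>u \<bullet> x\<bar> \<le> dual_norm N u"
  unfolding dual_norm_def by (rule cSup_upper[OF _ dual_norm_bdd]) blast

lemma dual_norm_least:
  assumes "\<And>x. N x \<le> 1 \<Longrightarrow> \<bar>u \<bullet> x\<bar> \<le> K"
  shows "dual_norm N u \<le> K"
proof -
  have "\<bar>u \<bullet> 0\<bar> \<in> {\<bar>u \<bullet> x\<bar> | x. N x \<le> 1}" by (rule CollectI, rule exI[of _ 0]) simp
  then show ?thesis
    unfolding dual_norm_def using assms by (intro cSup_least) auto
qed

lemma dual_norm_nonneg: "0 \<le> dual_norm N u"
  using dual_norm_upper[of 0 u] by simp

lemma inner_le_dual_norm: "\<bar>u \<bullet> x\<bar> \<le> dual_norm N u * N x"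
proof (cases "x = 0")
  case False
  then have "0 < N x" using N_nonneg[of x] N_eq_0_iff[of x] by auto
  then have "\<bar>u \<bullet> (inverse (N x) *\<^sub>R x)\<bar> \<le> dual_norm N u"
    by (intro dual_norm_upper) (simp add: N_scaleR)
  with \<open>0 < N x\<close> show ?thesis by (simp add: field_simps abs_mult)
qed simp

lemma dual_norm_pos:
  assumes "u \<noteq> 0"
  shows "0 < dual_norm N u"
proof -
  have "0 < u \<bullet> u" using assms by simp
  also have "\<dots> \<le> dual_norm N u * N u" using inner_le_dual_norm[of u u] by simp
  finally show ?thesis using dual_norm_nonneg[of u] by (cases "dual_norm N u = 0") auto
qed

lemma dual_norm_scaleR: "dual_norm N (c *\<^sub>R u) = \<bar>c\<bar> * dual_norm N u"
proof (rule antisym)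
  have le: "dual_norm N (k *\<^sub>R v) \<le> \<bar>k\<bar> * dual_norm N v" for k v
    by (rule dual_norm_least) (simp add: abs_mult mult_left_mono dual_norm_upper)
  show "dual_norm N (c *\<^sub>R u) \<le> \<bar>c\<bar> * dual_norm N u" by (rule le)
  show "\<bar>c\<bar> * dual_norm N u \<le> dual_norm N (c *\<^sub>R u)"
  proof (cases "c = 0")
    case False
    have "dual_norm N u \<le> \<bar>inverse c\<bar> * dual_norm N (c *\<^sub>R u)"
      using le[of "inverse c" "c *\<^sub>R u"] False by simp
    with False show ?thesis by (simp add: field_simps abs_inverse)
  qed (simp add: dual_norm_nonneg)
qed

lemma dual_norm_0 [simp]: "dual_norm N 0 = 0"
  using dual_norm_scaleR[of 0 0] by (simp only: scale_zero_left abs_zero mult_zero_left)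

lemma N_closed_ball_in_closure:
  assumes "0 < r" "N (y - x) \<le> r"
  shows "y \<in> closure {y. N (y - x) < r}"
proof (rule Lim_in_closed_set[OF closed_closure _ trivial_limit_at_left_real])
  show "((\<lambda>\<theta>. x + \<theta> *\<^sub>R (y - x)) \<longlongrightarrow> y) (at_left 1)"
    by (auto intro!: tendsto_eq_intros)
  have "x + \<theta> *\<^sub>R (y - x) \<in> {y. N (y - x) < r}" if "0 < \<theta>" "\<theta> < 1" for \<theta>
  proof -
    have "\<theta> * N (y - x) \<le> \<theta> * r" using that assms by (simp add: mult_left_mono)
    also have "\<dots> < r" using that assms by simp
    finally show ?thesis using that by (simp add: N_scaleR)
  qed
  then show "\<forall>\<^sub>F \<theta> in at_left 1. x + \<theta> *\<^sub>R (y - x) \<in> closure {y. N (y - x) < r}"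
    unfolding eventually_at_left_field by (intro exI[of _ 0]) (auto intro: closure_subset[THEN subsetD])
qed

lemma nearest_point_dual_certificate:
  assumes S: "convex S" and z: "z \<in> S" and x: "x \<notin> S"
    and nearest: "\<And>w. w \<in> S \<Longrightarrow> N (x - z) \<le> N (x - w)"
  obtains a where "dual_norm N a = 1" "\<And>w. w \<in> S \<Longrightarrow> a \<bullet> w \<le> a \<bullet> z"
    "a \<bullet> (x - z) = N (x - z)"
proof -
  define \<rho> where "\<rho> = N (x - z)"
  have "0 < \<rho>"
    using x z N_nonneg[of "x - z"] N_eq_0_iff[of "x - z"] by (auto simp: \<rho>_def)
  define T where "T = {y. N (y - x) < \<rho>}"
  have "x \<in> T" using \<open>0 < \<rho>\<close> by (simp add: T_def)
  moreover have "S \<inter> T = {}"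
    using nearest by (force simp: T_def \<rho>_def N_minus_commute)
  ultimately obtain a b where "a \<noteq> 0" and a_S: "\<And>w. w \<in> S \<Longrightarrow> a \<bullet> w \<le> b"
    and a_T: "\<And>y. y \<in> T \<Longrightarrow> b \<le> a \<bullet> y"
    using separating_hyperplane_sets[OF S convex_sublevel_lt[OF convex_on_N_diff]] z
    unfolding T_def by blast
  \<comment> \<open>by continuity the separation extends from the open to the closed ball around x\<close>
  have a_ball: "b \<le> a \<bullet> y" if "N (y - x) \<le> \<rho>" for y
  proof -
    have "closure T \<subseteq> {y. b \<le> a \<bullet> y}"
      using a_T by (intro closure_minimal closed_halfspace_ge) auto
    with N_closed_ball_in_closure[OF \<open>0 < \<rho>\<close> that] show ?thesis by (auto simp: T_def)
  qed
  have normal: "a \<bullet> w \<le> a \<bullet> z" if "w \<in> S" for w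
    using a_S[OF that] a_ball[of z] by (simp add: \<rho>_def N_minus_commute)
  have "dual_norm N a \<le> a \<bullet> (x - z) / \<rho>"
  proof (rule dual_norm_least)
    fix v assume "N v \<le> 1"
    then have "N ((x + s *\<^sub>R v) - x) \<le> \<rho>" if "\<bar>s\<bar> = \<rho>" for s
      using that \<open>0 < \<rho>\<close> by (simp add: N_scaleR mult_left_le)
    then have "a \<bullet> z \<le> a \<bullet> x + s * (a \<bullet> v)" if "\<bar>s\<bar> = \<rho>" for s
      using that a_ball[of "x + s *\<^sub>R v"] a_S[OF z] by (simp add: inner_add_right)
    from this[of \<rho>] this[of "- \<rho>"] \<open>0 < \<rho>\<close> show "\<bar>a \<bullet> v\<bar> \<le> a \<bullet> (x - z) / \<rho>"
      by (simp add: field_simps inner_diff_right abs_le_iff)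
  qed
  with \<open>0 < \<rho>\<close> have "\<rho> * dual_norm N a \<le> a \<bullet> (x - z)" by (simp add: field_simps)
  moreover have "a \<bullet> (x - z) \<le> dual_norm N a * \<rho>"
    using inner_le_dual_norm[of a "x - z"] by (simp add: \<rho>_def)
  ultimately have eq: "a \<bullet> (x - z) = dual_norm N a * \<rho>" by (simp add: mult.commute)
  have "0 < dual_norm N a" using \<open>a \<noteq> 0\<close> by (rule dual_norm_pos)
  show thesis
  proof (rule that[of "inverse (dual_norm N a) *\<^sub>R a"])
    show "dual_norm N (inverse (dual_norm N a) *\<^sub>R a) = 1"
      using \<open>0 < dual_norm N a\<close> by (simp add: dual_norm_scaleR)
    show "(inverse (dual_norm N a) *\<^sub>R a) \<bullet> w \<le> (inverse (dual_norm N a) *\<^sub>R a) \<bullet> z"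
      if "w \<in> S" for w
      using normal[OF that] \<open>0 < dual_norm N a\<close> by (simp add: mult_left_mono)
    show "(inverse (dual_norm N a) *\<^sub>R a) \<bullet> (x - z) = N (x - z)"
      using eq \<open>0 < dual_norm N a\<close> by (simp add: \<rho>_def)
  qed
qed

lemma norming_functional:
  obtains w where "dual_norm N w \<le> 1" "w \<bullet> x = N x"
proof (cases "x = 0")
  case False
  obtain a where "dual_norm N a = 1" "a \<bullet> (x - 0) = N (x - 0)"
    by (rule nearest_point_dual_certificate[of "{0}" 0 x]) (use False in auto)
  then show thesis by (intro that[of a]) auto
qed (auto intro: that[of 0])

end

section \<open>The Lipschitz modulus\<close>

lemma max_le_param_norm: "max (dual_norm N (A $ t)) \<bar>b $ t\<bar> \<le> param_norm N A b"
  unfolding param_norm_def by (rule Max_ge) auto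

lemma param_norm_nonneg: "0 \<le> param_norm N A b"
  using max_le_param_norm[of N A undefined b] by linarith

definition max_inv_dist :: "(real^'n \<Rightarrow> real) \<Rightarrow> real^'n^'m \<Rightarrow> real^'m \<Rightarrow> real^'n \<Rightarrow> real"
  where "max_inv_dist N A b x = Max {inv_dist_conv N ((\<lambda>t. A $ t) ` D) | D. D \<in> Dfam A b x}"

definition lipusc_bound :: "(real^'n \<Rightarrow> real) \<Rightarrow> real^'n^'m \<Rightarrow> real^'m \<Rightarrow> real"
  where "lipusc_bound N A b = Max {(N x + 1) * max_inv_dist N A b x | x. x \<in> Eset A b}"

definition upper_lipschitz_const ::
    "(real^'n \<Rightarrow> real) \<Rightarrow> real^'n^'m \<Rightarrow> real^'m \<Rightarrow> real \<Rightarrow> bool" where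
  "upper_lipschitz_const N Ab bb \<kappa> \<longleftrightarrow> 0 \<le> \<kappa> \<and>
     (\<exists>\<epsilon>>0. \<forall>A b. param_norm N (A - Ab) (b - bb) < \<epsilon> \<longrightarrow>
        (\<forall>x \<in> feas A b. Inf {N (x - z) | z. z \<in> feas Ab bb} \<le> \<kappa> * param_norm N (A - Ab) (b - bb)))"

lemma Lipusc_eq_Inf: "Lipusc N Ab bb = Inf {ereal \<kappa> | \<kappa>. upper_lipschitz_const N Ab bb \<kappa>}"
  by (simp add: Lipusc_def upper_lipschitz_const_def)

context vector_norm
begin

lemma inv_dist_conv_nonneg: "0 \<le> inv_dist_conv N C"
proof (cases "C = {}")
  case False
  then have "0 \<le> Inf {dual_norm N u | u. u \<in> convex hull C}"
    by (intro cInf_greatest) (auto simp: dual_norm_nonneg)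
  with False show ?thesis by (simp add: inv_dist_conv_def)
qed (simp add: inv_dist_conv_def)

lemma inv_dist_conv_le:
  assumes "C \<noteq> {}" "0 < c" and le: "\<And>u. u \<in> convex hull C \<Longrightarrow> c \<le> K * dual_norm N u"
  shows "c * inv_dist_conv N C \<le> K"
proof -
  obtain u0 where u0: "u0 \<in> convex hull C" using assms(1) by (metis ex_in_conv hull_inc)
  have "0 < K"
    using le[OF u0] \<open>0 < c\<close> dual_norm_nonneg[of u0]
    by (metis leD leI less_le_trans mult_nonpos_nonneg)
  let ?I = "Inf {dual_norm N u | u. u \<in> convex hull C}"
  have "c / K \<le> ?I"
    using u0 le \<open>0 < K\<close> by (intro cInf_greatest) (auto simp: field_simps)
  moreover have "0 < c / K" using \<open>0 < c\<close> \<open>0 < K\<close> by simp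
  ultimately have "0 < ?I" "c \<le> K * ?I"
    using \<open>0 < K\<close> by (linarith, simp add: pos_divide_le_eq mult.commute)
  with assms(1) show ?thesis
    by (simp add: inv_dist_conv_def divide_le_eq flip: divide_inverse)
qed

lemma inv_dist_conv_ge:
  assumes exposed: "\<And>c. c \<in> C \<Longrightarrow> c \<bullet> d = 1" and u: "u \<in> convex hull C"
  shows "inverse (dual_norm N u) \<le> inv_dist_conv N C"
proof -
  let ?S = "{dual_norm N v | v. v \<in> convex hull C}"
  have lb: "1 \<le> dual_norm N v * N d" if "v \<in> convex hull C" for v
  proof -
    have "v \<bullet> d = 1" using that exposed by (rule inner_convex_hull_eq)
    with inner_le_dual_norm[of v d] show ?thesis by simp
  qed
  then have "0 < N d"
    using u N_nonneg[of d] by (metis mult_zero_right not_one_le_zero order_less_le)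
  have lower: "inverse (N d) \<le> Inf ?S"
    using u lb \<open>0 < N d\<close> by (intro cInf_greatest) (auto simp: field_simps)
  moreover have "0 < inverse (N d)" using \<open>0 < N d\<close> by simp
  ultimately have "0 < Inf ?S" by linarith
  moreover have "Inf ?S \<le> dual_norm N u"
    using u by (intro cInf_lower) (auto intro: bdd_belowI[of _ 0] dual_norm_nonneg)
  moreover have "C \<noteq> {}" using u by auto
  ultimately show ?thesis by (simp add: inv_dist_conv_def le_imp_inverse_le)
qed

lemma inv_dist_conv_le_max_inv_dist:
  "D \<in> Dfam A b x \<Longrightarrow> inv_dist_conv N ((\<lambda>t. A $ t) ` D) \<le> max_inv_dist N A b x"
  unfolding max_inv_dist_def by (rule Max_ge) (auto simp: Setcompr_eq_image finite_Dfam)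

lemma max_inv_dist_nonneg: "0 \<le> max_inv_dist N A b x"
  using inv_dist_conv_le_max_inv_dist[OF empty_in_Dfam] inv_dist_conv_nonneg order_trans by blast

lemma max_inv_dist_attained:
  obtains D where "D \<in> Dfam A b x" "max_inv_dist N A b x = inv_dist_conv N ((\<lambda>t. A $ t) ` D)"
proof -
  have "max_inv_dist N A b x \<in> {inv_dist_conv N ((\<lambda>t. A $ t) ` D) | D. D \<in> Dfam A b x}"
    unfolding max_inv_dist_def using empty_in_Dfam
    by (intro Max_in) (auto simp: Setcompr_eq_image finite_Dfam)
  then show thesis using that by blast
qed

lemma max_inv_dist_mono:
  "Dfam A b z \<subseteq> Dfam A b v \<Longrightarrow> max_inv_dist N A b z \<le> max_inv_dist N A b v"
  by (metis max_inv_dist_attained inv_dist_conv_le_max_inv_dist subsetD)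

lemma max_inv_dist_le_sum:
  "max_inv_dist N (A :: real^'n^'m::finite) b x \<le> (\<Sum>D\<in>UNIV. inv_dist_conv N ((\<lambda>t. A $ t) ` D))"
  by (metis max_inv_dist_attained finite UNIV_I inv_dist_conv_nonneg member_le_sum)

lemma normal_certificate_le_max_inv_dist:
  fixes Ab :: "real^'n^'m::finite"
  assumes z: "z \<in> feas Ab bb" and a: "dual_norm N a = 1"
    and normal: "\<And>w. w \<in> feas Ab bb \<Longrightarrow> a \<bullet> w \<le> a \<bullet> z"
    and viol: "\<And>t. Ab $ t \<bullet> x - bb $ t \<le> \<gamma>" and "0 \<le> \<gamma>"
  shows "a \<bullet> (x - z) \<le> max_inv_dist N Ab bb z * \<gamma>"
proof -
  obtain D d where D: "D \<subseteq> active Ab bb z" "\<forall>t\<in>D. Ab $ t \<bullet> d = 1"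
    "\<forall>t\<in>active Ab bb z - D. Ab $ t \<bullet> d < 1"
    and a_cone: "a \<in> convex_cone hull ((\<lambda>t. Ab $ t) ` D)"
    by (rule convex_cone_hull_exposed_subfamily[OF _ normal_in_active_cone[OF z normal]]) simp
  have "a \<noteq> 0" using a by auto
  with a_cone obtain L u where "0 \<le> L" and u: "u \<in> convex hull ((\<lambda>t. Ab $ t) ` D)"
    and a_eq: "a = L *\<^sub>R u"
    by (auto simp: convex_cone_hull_convex_hull)
  have "L * dual_norm N u = 1" using a \<open>0 \<le> L\<close> by (simp add: a_eq dual_norm_scaleR)
  then have "L = inverse (dual_norm N u)" by (simp add: inverse_unique[symmetric] mult.commute)
  also have "\<dots> \<le> inv_dist_conv N ((\<lambda>t. Ab $ t) ` D)"
    using D(2) u by (intro inv_dist_conv_ge) auto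
  also have "\<dots> \<le> max_inv_dist N Ab bb z"
    using D by (intro inv_dist_conv_le_max_inv_dist) (auto simp: Dfam_def)
  finally have L: "L \<le> max_inv_dist N Ab bb z" .
  have "u \<bullet> (x - z) \<le> \<gamma>"
    by (rule inner_convex_hull_le[OF u]) (use D(1) viol in \<open>auto simp: active_def inner_diff_right\<close>)
  then have "a \<bullet> (x - z) \<le> L * \<gamma>" using \<open>0 \<le> L\<close> by (simp add: a_eq mult_left_mono)
  also have "\<dots> \<le> max_inv_dist N Ab bb z * \<gamma>" using L \<open>0 \<le> \<gamma>\<close> by (rule mult_right_mono)
  finally show ?thesis .
qed

lemma feas_error_bound:
  fixes Ab :: "real^'n^'m::finite"
  assumes compact: "compact (feas Ab bb)" and ne: "feas Ab bb \<noteq> {}"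
    and viol: "\<And>t. Ab $ t \<bullet> x - bb $ t \<le> \<gamma>" and "0 \<le> \<gamma>"
  obtains z where "z \<in> feas Ab bb" "Inf {N (x - w) | w. w \<in> feas Ab bb} = N (x - z)"
    "N (x - z) \<le> max_inv_dist N Ab bb z * \<gamma>"
proof -
  let ?F = "feas Ab bb"
  have "continuous_on ?F (\<lambda>w. N (x - w))"
    by (rule continuous_on_compose2[OF continuous_on_N[of UNIV]]) (auto intro!: continuous_intros)
  then obtain z where z: "z \<in> ?F" and nearest: "\<And>w. w \<in> ?F \<Longrightarrow> N (x - z) \<le> N (x - w)"
    using continuous_attains_inf[OF compact ne] by blast
  have "Inf {N (x - w) | w. w \<in> ?F} = N (x - z)"
    using z nearest by (intro cInf_eq_minimum) auto
  moreover have "N (x - z) \<le> max_inv_dist N Ab bb z * \<gamma>"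
  proof (cases "x \<in> ?F")
    case True
    with nearest[OF True] N_nonneg[of "x - z"] max_inv_dist_nonneg[of Ab bb z] \<open>0 \<le> \<gamma>\<close>
    show ?thesis by simp
  next
    case False
    obtain a where "dual_norm N a = 1" "\<And>w. w \<in> ?F \<Longrightarrow> a \<bullet> w \<le> a \<bullet> z"
      "a \<bullet> (x - z) = N (x - z)"
      using nearest_point_dual_certificate[OF convex_feas z False nearest] by blast
    with normal_certificate_le_max_inv_dist[OF z _ _ viol \<open>0 \<le> \<gamma>\<close>] show ?thesis by metis
  qed
  ultimately show thesis using z that by blast
qed

lemma max_inv_dist_le_lipusc_bound:
  fixes Ab :: "real^'n^'m::finite"
  assumes ne: "feas Ab bb \<noteq> {}" and bdd: "bounded (feas Ab bb)" and z: "z \<in> feas Ab bb"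
  shows "(N z + 1) * max_inv_dist N Ab bb z \<le> lipusc_bound N Ab bb"
proof -
  let ?F = "feas Ab bb" and ?H = "max_inv_dist N Ab bb z"
  define \<Phi> where "\<Phi> = {w \<in> ?F. active Ab bb z \<subseteq> active Ab bb w}"
  have face: "\<Phi> face_of ?F" unfolding \<Phi>_def by (rule active_face_of_feas)
  have "compact ?F" using bdd closed_feas by (simp add: compact_eq_bounded_closed)
  then have "compact \<Phi>" using face by (rule face_of_imp_compact[OF convex_feas])
  then have \<Phi>_hull: "\<Phi> = convex hull {v. v extreme_point_of \<Phi>}"
    using face_of_imp_convex[OF face] by (rule Krein_Milman_Minkowski)
  have finE: "finite (Eset Ab bb)"
    by (simp add: Eset_eq_extreme_points[OF ne bdd] finite_polyhedron_extreme_points[OF polyhedron_feas])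
  \<comment> \<open>the extreme points of the face through z are vertices whose families D contain those of z\<close>
  have "{v. v extreme_point_of \<Phi>} \<subseteq> {y. (N y + 1) * ?H \<le> lipusc_bound N Ab bb}"
  proof safe
    fix v assume "v extreme_point_of \<Phi>"
    then have "v \<in> Eset Ab bb" "active Ab bb z \<subseteq> active Ab bb v"
      using extreme_point_of_face[OF face] Eset_eq_extreme_points[OF ne bdd] by (auto simp: \<Phi>_def)
    then have "(N v + 1) * ?H \<le> (N v + 1) * max_inv_dist N Ab bb v"
      using z N_nonneg[of v] by (intro mult_left_mono max_inv_dist_mono Dfam_mono) auto
    also have "\<dots> \<le> lipusc_bound N Ab bb"
      unfolding lipusc_bound_def using finE \<open>v \<in> Eset Ab bb\<close>
      by (intro Max_ge) (auto simp: Setcompr_eq_image)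
    finally show "(N v + 1) * ?H \<le> lipusc_bound N Ab bb" .
  qed
  moreover have "convex {y. (N y + 1) * ?H \<le> lipusc_bound N Ab bb}"
  proof (rule convex_sublevel_le)
    have "convex_on UNIV (\<lambda>y. ?H * N (y - 0) + ?H)"
      using max_inv_dist_nonneg convex_on_N_diff[of 0]
      by (intro convex_on_add convex_on_cmul) (auto simp only: convex_on_const convex_UNIV)
    then show "convex_on UNIV (\<lambda>y. (N y + 1) * ?H)" by (simp add: algebra_simps)
  qed
  ultimately have "\<Phi> \<subseteq> {y. (N y + 1) * ?H \<le> lipusc_bound N Ab bb}"
    by (subst \<Phi>_hull) (rule hull_minimal)
  with z show ?thesis by (auto simp: \<Phi>_def)
qed

lemma param_norm_tilt:
  assumes "dual_norm N w \<le> 1" "0 \<le> e"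
  shows "param_norm N ((\<chi> t. Ab $ t - e *\<^sub>R w) - Ab) ((\<chi> t. bb $ t + e) - bb) = e"
proof -
  have "dual_norm N (- (e *\<^sub>R w)) \<le> e"
    using mult_left_mono[OF assms] dual_norm_scaleR[of "- e" w] assms(2) by simp
  then have "max (dual_norm N (((\<chi> t. Ab $ t - e *\<^sub>R w) - Ab) $ t))
      \<bar>((\<chi> t. bb $ t + e) - bb) $ t\<bar> = e" for t
    using assms(2) by simp
  then show ?thesis by (simp add: param_norm_def)
qed

lemma eventually_tilted_feas:
  assumes xb: "xb \<in> feas Ab bb" and d: "\<And>t. t \<in> active Ab bb xb \<Longrightarrow> Ab $ t \<bullet> d \<le> 1"
    and w: "dual_norm N w \<le> 1" "w \<bullet> xb = N xb"
  shows "eventually (\<lambda>e. xb + (e * (N xb + 1) / (1 + e * N d)) *\<^sub>R d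
    \<in> feas (\<chi> t. Ab $ t - e *\<^sub>R w) (\<chi> t. bb $ t + e)) (at_right 0)"
proof (rule eventually_in_feas[OF xb])
  define s where "s e = e * (N xb + 1) / (1 + e * N d)" for e :: real
  show "((\<lambda>e. (\<chi> t. Ab $ t - e *\<^sub>R w) $ t \<bullet> (xb + (e * (N xb + 1) / (1 + e * N d)) *\<^sub>R d)
      - (\<chi> t. bb $ t + e) $ t) \<longlongrightarrow> Ab $ t \<bullet> xb - bb $ t) (at_right 0)" for t
    by (auto intro!: tendsto_eq_intros)
  have wd: "- (w \<bullet> d) \<le> N d"
    using inner_le_dual_norm[of w d] mult_right_mono[OF w(1) N_nonneg[of d]] by linarith
  show "eventually (\<lambda>e. (\<chi> t. Ab $ t - e *\<^sub>R w) $ t \<bullet> (xb + (e * (N xb + 1) / (1 + e * N d)) *\<^sub>R d)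
      \<le> (\<chi> t. bb $ t + e) $ t) (at_right 0)"
    if "t \<in> active Ab bb xb" for t
    using eventually_at_right_less[of "0::real"]
  proof eventually_elim
    case (elim e)
    have "0 < 1 + e * N d" using elim N_nonneg[of d] by (simp add: add_pos_nonneg)
    then have "0 < s e" and s_eq: "s e * (1 + e * N d) = e * (N xb + 1)"
      using elim N_nonneg[of xb] by (simp_all add: s_def)
    then have "s e * (Ab $ t \<bullet> d) \<le> s e" using d[OF that] by (simp add: mult_left_le)
    moreover have "e * s e * (- (w \<bullet> d)) \<le> e * s e * N d"
      using \<open>0 < s e\<close> elim by (intro mult_left_mono[OF wd]) simp
    ultimately have "s e * (Ab $ t \<bullet> d) - e * s e * (w \<bullet> d) \<le> s e * (1 + e * N d)"
      by (simp add: algebra_simps)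
    with that w(2) s_eq have "(Ab $ t - e *\<^sub>R w) \<bullet> (xb + s e *\<^sub>R d) \<le> bb $ t + e"
      by (simp add: active_def inner_diff_left inner_add_right algebra_simps)
    then show ?case by (simp add: s_def)
  qed
qed

lemma dist_feas_ge:
  fixes Ab :: "real^'n^'m::finite"
  assumes xb: "xb \<in> feas Ab bb" and D: "D \<subseteq> active Ab bb xb" "\<forall>t\<in>D. Ab $ t \<bullet> d = 1"
    and u: "u \<in> convex hull ((\<lambda>t. Ab $ t) ` D)"
  shows "s \<le> dual_norm N u * Inf {N (xb + s *\<^sub>R d - z) | z. z \<in> feas Ab bb}"
proof -
  have "u \<bullet> d = 1" by (rule inner_convex_hull_eq[OF u]) (use D in auto)
  then have "0 < dual_norm N u" by (intro dual_norm_pos) auto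
  have "s / dual_norm N u \<le> N (xb + s *\<^sub>R d - z)" if z: "z \<in> feas Ab bb" for z
  proof -
    have "0 \<le> u \<bullet> (xb - z)"
      by (rule inner_convex_hull_ge[OF u])
        (use D z xb in \<open>auto simp: active_def feas_def inner_diff_right\<close>)
    then have "s \<le> u \<bullet> (xb + s *\<^sub>R d - z)"
      using \<open>u \<bullet> d = 1\<close> by (simp add: inner_add_right inner_diff_right)
    also have "\<dots> \<le> dual_norm N u * N (xb + s *\<^sub>R d - z)"
      using inner_le_dual_norm[of u "xb + s *\<^sub>R d - z"] by linarith
    finally show ?thesis using \<open>0 < dual_norm N u\<close> by (simp add: field_simps)
  qed
  then have "s / dual_norm N u \<le> Inf {N (xb + s *\<^sub>R d - z) | z. z \<in> feas Ab bb}"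
    using xb by (intro cInf_greatest) auto
  with \<open>0 < dual_norm N u\<close> show ?thesis by (simp add: field_simps)
qed

lemma inv_dist_conv_le_of_dist_feas:
  fixes Ab :: "real^'n^'m::finite"
  assumes xb: "xb \<in> feas Ab bb"
    and D: "D \<noteq> {}" "D \<subseteq> active Ab bb xb" "\<forall>t\<in>D. Ab $ t \<bullet> d = 1" and "0 < e"
    and dist: "Inf {N (xb + (e * (N xb + 1) / (1 + e * N d)) *\<^sub>R d - z) | z. z \<in> feas Ab bb}
      \<le> \<kappa> * e"
  shows "(N xb + 1) * inv_dist_conv N ((\<lambda>t. Ab $ t) ` D) \<le> \<kappa> * (1 + e * N d)"
proof -
  let ?C = "(\<lambda>t. Ab $ t) ` D"
  define s where "s = e * (N xb + 1) / (1 + e * N d)"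
  have "0 < 1 + e * N d" using \<open>0 < e\<close> N_nonneg[of d] by (simp add: add_pos_nonneg)
  then have "0 < s" and s_eq: "s * (1 + e * N d) = e * (N xb + 1)"
    using \<open>0 < e\<close> N_nonneg[of xb] by (simp_all add: s_def)
  have "s \<le> (\<kappa> * e) * dual_norm N u" if "u \<in> convex hull ?C" for u
  proof -
    have "s \<le> dual_norm N u * Inf {N (xb + s *\<^sub>R d - z) | z. z \<in> feas Ab bb}"
      by (rule dist_feas_ge[OF xb D(2,3) that])
    also have "\<dots> \<le> dual_norm N u * (\<kappa> * e)"
      using dist unfolding s_def by (rule mult_left_mono[OF _ dual_norm_nonneg])
    finally show ?thesis by (simp only: ac_simps)
  qed
  then have "s * inv_dist_conv N ?C \<le> \<kappa> * e"
    using D(1) \<open>0 < s\<close> by (intro inv_dist_conv_le) auto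
  then have "s * inv_dist_conv N ?C * (1 + e * N d) \<le> \<kappa> * e * (1 + e * N d)"
    using \<open>0 < 1 + e * N d\<close> by (intro mult_right_mono) simp_all
  then have "s * (1 + e * N d) * inv_dist_conv N ?C \<le> \<kappa> * e * (1 + e * N d)"
    by (simp only: ac_simps)
  then have "e * ((N xb + 1) * inv_dist_conv N ?C) \<le> e * (\<kappa> * (1 + e * N d))"
    by (simp only: s_eq ac_simps)
  with \<open>0 < e\<close> show ?thesis by simp
qed

lemma inv_dist_conv_le_upper_lipschitz_const:
  fixes Ab :: "real^'n^'m::finite"
  assumes xb: "xb \<in> feas Ab bb" and D: "D \<in> Dfam Ab bb xb"
    and \<kappa>: "upper_lipschitz_const N Ab bb \<kappa>"
  shows "(N xb + 1) * inv_dist_conv N ((\<lambda>t. Ab $ t) ` D) \<le> \<kappa>"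
proof (cases "D = {}")
  case True
  with \<kappa> show ?thesis by (simp add: inv_dist_conv_def upper_lipschitz_const_def)
next
  case False
  let ?F = "feas Ab bb" and ?C = "(\<lambda>t. Ab $ t) ` D"
  obtain d where D_act: "D \<subseteq> active Ab bb xb" and d1: "\<forall>t\<in>D. Ab $ t \<bullet> d = 1"
    and d2: "\<forall>t\<in>active Ab bb xb - D. Ab $ t \<bullet> d < 1"
    using D unfolding Dfam_def by blast
  obtain \<epsilon> where "0 < \<epsilon>" and valid: "\<And>A b x. param_norm N (A - Ab) (b - bb) < \<epsilon> \<Longrightarrow>
      x \<in> feas A b \<Longrightarrow> Inf {N (x - z) | z. z \<in> ?F} \<le> \<kappa> * param_norm N (A - Ab) (b - bb)"
    using \<kappa> unfolding upper_lipschitz_const_def by blast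
  obtain w where w: "dual_norm N w \<le> 1" "w \<bullet> xb = N xb" by (rule norming_functional)
  define s where "s e = e * (N xb + 1) / (1 + e * N d)" for e :: real
  have "\<And>t. t \<in> active Ab bb xb \<Longrightarrow> Ab $ t \<bullet> d \<le> 1"
    using d1 d2 by (metis Diff_iff less_imp_le order_refl)
  from eventually_tilted_feas[OF xb this w]
  have "eventually (\<lambda>e. xb + s e *\<^sub>R d \<in> feas (\<chi> t. Ab $ t - e *\<^sub>R w) (\<chi> t. bb $ t + e)) (at_right 0)"
    by (simp add: s_def)
  moreover have "eventually (\<lambda>e. e < \<epsilon>) (at_right 0)"
    using \<open>0 < \<epsilon>\<close> by (intro order_tendstoD(2)[OF tendsto_ident_at]) auto
  ultimately have "eventually (\<lambda>e. (N xb + 1) * inv_dist_conv N ?C \<le> \<kappa> * (1 + e * N d)) (at_right 0)"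
    using eventually_at_right_less[of "0::real"]
  proof eventually_elim
    case (elim e)
    have "param_norm N ((\<chi> t. Ab $ t - e *\<^sub>R w) - Ab) ((\<chi> t. bb $ t + e) - bb) = e"
      using elim(3) by (intro param_norm_tilt[OF w(1)]) simp
    from valid[OF _ elim(1), unfolded this] elim(2)
    have "Inf {N (xb + s e *\<^sub>R d - z) | z. z \<in> ?F} \<le> \<kappa> * e" by blast
    with False D_act d1 elim(3) show ?case
      unfolding s_def by (intro inv_dist_conv_le_of_dist_feas[OF xb]) auto
  qed
  moreover have "((\<lambda>e. \<kappa> * (1 + e * N d)) \<longlongrightarrow> \<kappa>) (at_right 0)"
    by (auto intro!: tendsto_eq_intros)
  ultimately show ?thesis by (intro tendsto_lowerbound) auto
qed

lemma violation_le_param_norm: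
  assumes "x \<in> feas A b"
  shows "Ab $ t \<bullet> x - bb $ t \<le> param_norm N (A - Ab) (b - bb) * (1 + N x)"
proof -
  let ?\<delta> = "param_norm N (A - Ab) (b - bb)"
  have "max (dual_norm N ((A - Ab) $ t)) \<bar>(b - bb) $ t\<bar> \<le> ?\<delta>"
    by (rule max_le_param_norm)
  then have "dual_norm N (A $ t - Ab $ t) \<le> ?\<delta>" "\<bar>b $ t - bb $ t\<bar> \<le> ?\<delta>" by auto
  moreover have "- ((A $ t - Ab $ t) \<bullet> x) \<le> dual_norm N (A $ t - Ab $ t) * N x"
    using inner_le_dual_norm[of "A $ t - Ab $ t" x] by linarith
  ultimately have "- ((A $ t - Ab $ t) \<bullet> x) \<le> ?\<delta> * N x" "b $ t - bb $ t \<le> ?\<delta>"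
    using mult_right_mono[OF _ N_nonneg[of x]] by fastforce+
  moreover have "A $ t \<bullet> x \<le> b $ t" using assms by (simp add: feas_def)
  ultimately show ?thesis by (simp add: inner_diff_left algebra_simps)
qed

lemma dist_feas_perturbed_le:
  fixes Ab :: "real^'n^'m::finite"
  assumes ne: "feas Ab bb \<noteq> {}" and bdd: "bounded (feas Ab bb)" and x: "x \<in> feas A b"
  defines "\<delta> \<equiv> param_norm N (A - Ab) (b - bb)"
    and "H \<equiv> \<Sum>D\<in>UNIV. inv_dist_conv N ((\<lambda>t. Ab $ t) ` D)"
  shows "Inf {N (x - z) | z. z \<in> feas Ab bb} * (1 - H * \<delta>) \<le> \<delta> * lipusc_bound N Ab bb"
proof -
  let ?F = "feas Ab bb" and ?M = "lipusc_bound N Ab bb"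
  have viol: "Ab $ t \<bullet> x - bb $ t \<le> \<delta> * (1 + N x)" for t
    unfolding \<delta>_def by (rule violation_le_param_norm[OF x])
  have "0 \<le> \<delta>" unfolding \<delta>_def by (rule param_norm_nonneg)
  have "compact ?F" using bdd closed_feas by (simp add: compact_eq_bounded_closed)
  moreover have "0 \<le> \<delta> * (1 + N x)" using \<open>0 \<le> \<delta>\<close> N_nonneg[of x] by simp
  ultimately obtain z where z: "z \<in> ?F" and inf: "Inf {N (x - w) | w. w \<in> ?F} = N (x - z)"
    and err: "N (x - z) \<le> max_inv_dist N Ab bb z * (\<delta> * (1 + N x))"
    using feas_error_bound[OF _ ne viol] by blast
  define \<rho> where "\<rho> = N (x - z)"
  define Hz where "Hz = max_inv_dist N Ab bb z"
  have "0 \<le> Hz" "Hz \<le> H" "(N z + 1) * Hz \<le> ?M"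
    using max_inv_dist_nonneg max_inv_dist_le_sum max_inv_dist_le_lipusc_bound[OF ne bdd z]
    by (auto simp: Hz_def H_def)
  have "N x \<le> N z + \<rho>" using N_triangle[of z "x - z"] by (simp add: \<rho>_def)
  then have "\<rho> \<le> Hz * \<delta> * (1 + N z + \<rho>)"
    using err mult_left_mono[of "N x" "N z + \<rho>" "Hz * \<delta>"] \<open>0 \<le> Hz\<close> \<open>0 \<le> \<delta>\<close>
    by (simp add: \<rho>_def Hz_def algebra_simps)
  also have "\<dots> = \<delta> * ((N z + 1) * Hz) + Hz * \<delta> * \<rho>" by (simp add: algebra_simps)
  also have "\<dots> \<le> \<delta> * ?M + H * \<delta> * \<rho>"
    using \<open>(N z + 1) * Hz \<le> ?M\<close> \<open>Hz \<le> H\<close> \<open>0 \<le> \<delta>\<close> N_nonneg[of "x - z"]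
    by (intro add_mono mult_left_mono mult_right_mono) (auto simp: \<rho>_def)
  finally show ?thesis by (simp add: inf \<rho>_def algebra_simps)
qed

lemma lipusc_bound_nonneg:
  assumes "feas Ab bb \<noteq> {}" "bounded (feas Ab bb)"
  shows "0 \<le> lipusc_bound N Ab bb"
proof -
  obtain z where "z \<in> feas Ab bb" using assms(1) by blast
  with max_inv_dist_le_lipusc_bound[OF assms] N_nonneg[of z] max_inv_dist_nonneg[of Ab bb z]
  show ?thesis by (meson add_nonneg_nonneg mult_nonneg_nonneg order_trans zero_le_one)
qed

lemma upper_lipschitz_const_if_bound_less:
  fixes Ab :: "real^'n^'m::finite"
  assumes ne: "feas Ab bb \<noteq> {}" and bdd: "bounded (feas Ab bb)"
    and \<kappa>: "lipusc_bound N Ab bb < \<kappa>"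
  shows "upper_lipschitz_const N Ab bb \<kappa>"
proof -
  let ?M = "lipusc_bound N Ab bb"
  define H where "H = (\<Sum>D\<in>UNIV. inv_dist_conv N ((\<lambda>t. Ab $ t) ` D))"
  have "0 \<le> ?M" by (rule lipusc_bound_nonneg[OF ne bdd])
  with \<kappa> have "0 < \<kappa>" by linarith
  have "eventually (\<lambda>\<delta>. ?M < \<kappa> * (1 - H * \<delta>)) (nhds 0)"
    using \<kappa> by (intro order_tendstoD(1)) (auto intro!: tendsto_eq_intros filterlim_ident)
  then obtain \<epsilon> where "0 < \<epsilon>" and \<epsilon>: "\<And>\<delta>. \<bar>\<delta>\<bar> < \<epsilon> \<Longrightarrow> ?M < \<kappa> * (1 - H * \<delta>)"
    by (auto simp: eventually_nhds_metric dist_real_def)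
  have "Inf {N (x - z) | z. z \<in> feas Ab bb} \<le> \<kappa> * param_norm N (A - Ab) (b - bb)"
    if "param_norm N (A - Ab) (b - bb) < \<epsilon>" and x: "x \<in> feas A b" for A b x
  proof -
    define \<delta> where "\<delta> = param_norm N (A - Ab) (b - bb)"
    define \<rho> where "\<rho> = Inf {N (x - z) | z. z \<in> feas Ab bb}"
    have "0 \<le> \<delta>" unfolding \<delta>_def by (rule param_norm_nonneg)
    have "?M < \<kappa> * (1 - H * \<delta>)"
      using \<epsilon> \<open>0 \<le> \<delta>\<close> that(1) by (simp add: \<delta>_def)
    then have "0 < 1 - H * \<delta>"
      using \<open>0 \<le> ?M\<close> \<open>0 < \<kappa>\<close> by (meson less_le_trans not_le mult_nonneg_nonpos less_imp_le)
    have "\<rho> * (1 - H * \<delta>) \<le> \<delta> * ?M"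
      unfolding \<rho>_def \<delta>_def H_def by (rule dist_feas_perturbed_le[OF ne bdd x])
    also have "\<dots> \<le> \<delta> * (\<kappa> * (1 - H * \<delta>))"
      using \<open>?M < \<kappa> * (1 - H * \<delta>)\<close> \<open>0 \<le> \<delta>\<close> by (intro mult_left_mono) auto
    finally have "\<rho> * (1 - H * \<delta>) \<le> (\<kappa> * \<delta>) * (1 - H * \<delta>)" by (simp only: ac_simps)
    with \<open>0 < 1 - H * \<delta>\<close> show ?thesis by (simp add: \<rho>_def \<delta>_def)
  qed
  with \<open>0 < \<kappa>\<close> \<open>0 < \<epsilon>\<close> show ?thesis
    unfolding upper_lipschitz_const_def by (intro conjI exI[of _ \<epsilon>]) auto
qed

lemma lipusc_bound_attained:
  fixes Ab :: "real^'n^'m::finite"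
  assumes ne: "feas Ab bb \<noteq> {}" and bdd: "bounded (feas Ab bb)"
  obtains x D where "x \<in> feas Ab bb" "D \<in> Dfam Ab bb x"
    "lipusc_bound N Ab bb = (N x + 1) * inv_dist_conv N ((\<lambda>t. Ab $ t) ` D)"
proof -
  let ?F = "feas Ab bb"
  have E: "Eset Ab bb = {x. x extreme_point_of ?F}" by (rule Eset_eq_extreme_points[OF ne bdd])
  have "compact ?F" using bdd closed_feas by (simp add: compact_eq_bounded_closed)
  then have "?F = convex hull Eset Ab bb" unfolding E by (rule Krein_Milman_Minkowski[OF _ convex_feas])
  then have "Eset Ab bb \<noteq> {}" using ne by auto
  moreover have "finite (Eset Ab bb)"
    unfolding E by (rule finite_polyhedron_extreme_points[OF polyhedron_feas])
  ultimately have "lipusc_bound N Ab bb \<in> (\<lambda>x. (N x + 1) * max_inv_dist N Ab bb x) ` Eset Ab bb"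
    unfolding lipusc_bound_def Setcompr_eq_image by (intro Max_in) auto
  then obtain x where x: "x \<in> Eset Ab bb"
    and M_eq: "lipusc_bound N Ab bb = (N x + 1) * max_inv_dist N Ab bb x"
    by blast
  obtain D where "D \<in> Dfam Ab bb x"
    and "max_inv_dist N Ab bb x = inv_dist_conv N ((\<lambda>t. Ab $ t) ` D)"
    by (rule max_inv_dist_attained)
  moreover have "x \<in> ?F" using x E by (auto simp: extreme_point_of_def)
  ultimately show thesis using M_eq that by simp
qed

theorem Lipusc_eq_lipusc_bound:
  fixes Ab :: "real^'n^'m::finite"
  assumes ne: "feas Ab bb \<noteq> {}" and bdd: "bounded (feas Ab bb)"
  shows "Lipusc N Ab bb = ereal (lipusc_bound N Ab bb)"
proof -
  let ?M = "lipusc_bound N Ab bb"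
  let ?K = "{ereal \<kappa> | \<kappa>. upper_lipschitz_const N Ab bb \<kappa>}"
  obtain x D where x: "x \<in> feas Ab bb" and D: "D \<in> Dfam Ab bb x"
    and M_eq: "?M = (N x + 1) * inv_dist_conv N ((\<lambda>t. Ab $ t) ` D)"
    by (rule lipusc_bound_attained[OF ne bdd])
  have "ereal ?M \<le> Inf ?K"
  proof (rule Inf_greatest)
    fix k assume "k \<in> ?K"
    then obtain \<kappa> where "k = ereal \<kappa>" "upper_lipschitz_const N Ab bb \<kappa>" by blast
    with inv_dist_conv_le_upper_lipschitz_const[OF x D] show "ereal ?M \<le> k" by (simp add: M_eq)
  qed
  moreover have "Inf ?K \<le> ereal ?M"
  proof (rule dense_ge)
    fix y assume "ereal ?M < y"
    then show "Inf ?K \<le> y"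
    proof (cases y)
      case (real r)
      with \<open>ereal ?M < y\<close> have "upper_lipschitz_const N Ab bb r"
        by (intro upper_lipschitz_const_if_bound_less[OF ne bdd]) simp
      with real show ?thesis by (blast intro: Inf_lower)
    qed auto
  qed
  ultimately show ?thesis by (simp add: Lipusc_eq_Inf)
qed

end

theorem corollary1:
  fixes N :: "real^'n::finite \<Rightarrow> real"
    and Ab :: "real^'n^'m::finite" and bb :: "real^'m"
  assumes "is_norm N"
    and "feas Ab bb \<noteq> {}" and "bounded (feas Ab bb)"
  shows "Lipusc N Ab bb =
    ereal (Max {(N x + 1) * Max {inv_dist_conv N ((\<lambda>t. Ab $ t) ` D) | D. D \<in> Dfam Ab bb x}
                | x. x \<in> Eset Ab bb})"
proof -
  interpret vector_norm N by unfold_locales (fact assms(1))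
  show ?thesis
    using Lipusc_eq_lipusc_bound[OF assms(2,3)]
    by (simp add: lipusc_bound_def max_inv_dist_def)
qed

end
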